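(* For $n\geq 1$ and all integers $k$, the alternating Eulerian numbers satisfy $$2\widehat{A}_{n+1,k}=(k+1)(\widehat{A}_{n,k+1}+\widehat{A}_{n,k-1})+(n-k+1)(\widehat{A}_{n,k}+\widehat{A}_{n,k-2}),$$ with initial conditions $\widehat{A}_{1,0}=1$ and $\widehat{A}_{1,k}=0$ for $k\neq 0$.
   Context: For $\pi=\pi_1\cdots\pi_n\in\mathfrak{S}_n$ (permutations of $\{1,\dots,n\}$), $\widehat{D}(\pi)=\{2i:\pi_{2i}<\pi_{2i+1}\}\cup\{2i+1:\pi_{2i+1}>\pi_{2i+2}\}$ (indices in $\{1,\dots,n-1\}$), ${\rm altdes}(\pi)=|\widehat{D}(\pi)|$, and $\widehat{A}_{n,k}$ is the number of $\pi\in\mathfrak{S}_n$ with ${\rm altdes}(\pi)=k$ (so $\widehat{A}_{n,k}=0$ if $k<0$ or $k>n-1$). *)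

theory Defs
  imports "HOL-Combinatorics.Permutations"
begin

definition altdes_set :: "nat \<Rightarrow> (nat \<Rightarrow> nat) \<Rightarrow> nat set" where
  "altdes_set n p = {i \<in> {1..<n}. (even i \<and> p i < p (Suc i)) \<or> (odd i \<and> p i > p (Suc i))}"

definition altdes :: "nat \<Rightarrow> (nat \<Rightarrow> nat) \<Rightarrow> nat" where
  "altdes n p = card (altdes_set n p)"

definition altEuler :: "nat \<Rightarrow> int \<Rightarrow> int" where
  "altEuler n k = int (card {p. p permutes {1..n} \<and> int (altdes n p) = k})"

end

theory Submission
  imports Defs "HOL-Combinatorics.Multiset_Permutations"
begin

text \<open>Permutations of \<open>{1..n}\<close> are handled as lists. Inserting \<open>n + 1\<close> into \<open>t\<close> at
  position \<open>j\<close> and replacing the part after it by its complement (the order-reversing relabelling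
  of its values) is a bijection from \<open>{0..n} \<times> S\<^sub>n\<close> onto \<open>S\<^sub>n\<^sub>+\<^sub>1\<close>. The new entry shifts the
  parity of every later position, and complementing the tail exactly compensates for that, so
  only the two steps next to \<open>n + 1\<close> change. Counting alternating descents once from the usual
  starting parity and once, through the complement of the whole permutation, from the opposite
  one, the \<open>2(n + 1)\<close> insertions into a \<open>t\<close> with \<open>a\<close> alternating descents have \<open>a + 1\<close>,
  \<open>a - 1\<close>, \<open>a + 2\<close> and \<open>a\<close> alternating descents with multiplicities \<open>a + 2\<close>, \<open>a\<close>, \<open>n - 1 - a\<close>
  and \<open>n + 1 - a\<close>. Summing over \<open>t\<close> gives the recurrence.\<close>

lemma bij_betw_if_inj_on_card_eq:
  assumes "inj_on f A" and "f ` A \<subseteq> B" and "finite B" and "card A = card B"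
  shows "bij_betw f A B"
  using assms by (simp add: bij_betw_def card_image card_subset_eq)

definition reflect :: "'a::linorder set \<Rightarrow> 'a \<Rightarrow> 'a" where
  "reflect V x = the (map_of (zip (sorted_list_of_set V) (rev (sorted_list_of_set V))) x)"

lemma reflect_nth:
  assumes "finite V" and "i < card V"
  shows "reflect V (sorted_list_of_set V ! i) = sorted_list_of_set V ! (card V - 1 - i)"
  using assms by (simp add: reflect_def map_of_zip_nth rev_nth)

lemma obtain_sorted_list_of_set_index:
  assumes "finite V" and "x \<in> V"
  obtains i where "i < card V" and "x = sorted_list_of_set V ! i"
  using assms by (metis in_set_conv_nth length_sorted_list_of_set set_sorted_list_of_set)

lemma reflect_mem:
  assumes "finite V" and "x \<in> V"
  shows "reflect V x \<in> V"
proof -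
  obtain i where "i < card V" and "x = sorted_list_of_set V ! i"
    using assms by (rule obtain_sorted_list_of_set_index)
  moreover have "card V - 1 - i < length (sorted_list_of_set V)"
    using \<open>i < card V\<close> by simp
  then have "sorted_list_of_set V ! (card V - 1 - i) \<in> V"
    using assms(1) by (metis nth_mem set_sorted_list_of_set)
  ultimately show ?thesis
    using assms by (simp add: reflect_nth)
qed

lemma reflect_reflect:
  assumes "finite V" and "x \<in> V"
  shows "reflect V (reflect V x) = x"
proof -
  obtain i where "i < card V" and "x = sorted_list_of_set V ! i"
    using assms by (rule obtain_sorted_list_of_set_index)
  then show ?thesis
    using assms by (simp add: reflect_nth)
qed

lemma reflect_strict_antimono:
  assumes V: "finite V" and "x \<in> V" "y \<in> V" "x < y"
  shows "reflect V y < reflect V x"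
proof -
  let ?L = "sorted_list_of_set V"
  have strict: "sorted_wrt (<) ?L" by (rule strict_sorted_list_of_set)
  obtain i j where ij: "i < card V" "j < card V" and "x = ?L ! i" "y = ?L ! j"
    using V \<open>x \<in> V\<close> \<open>y \<in> V\<close> by (metis obtain_sorted_list_of_set_index)
  have "i < j"
  proof (rule ccontr)
    assume "\<not> i < j"
    then have "?L ! j \<le> ?L ! i"
      using ij by (intro sorted_nth_mono) auto
    with \<open>x < y\<close> \<open>x = ?L ! i\<close> \<open>y = ?L ! j\<close> show False by simp
  qed
  with ij have "?L ! (card V - 1 - j) < ?L ! (card V - 1 - i)"
    by (intro sorted_wrt_nth_less[OF strict]) auto
  with ij \<open>x = ?L ! i\<close> \<open>y = ?L ! j\<close> V show ?thesis by (simp add: reflect_nth)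
qed

definition alt_step :: "bool \<Rightarrow> 'a::linorder \<Rightarrow> 'a \<Rightarrow> bool" where
  "alt_step b x y \<longleftrightarrow> (if b then y < x else x < y)"

lemma alt_step_antimono:
  assumes "x < y \<Longrightarrow> f y < f x" and "y < x \<Longrightarrow> f x < f y"
  shows "alt_step (\<not> b) (f x) (f y) \<longleftrightarrow> alt_step b x y"
  using assms unfolding alt_step_def by (cases x y rule: linorder_cases) auto

fun altdes_list :: "bool \<Rightarrow> 'a::linorder list \<Rightarrow> nat" where
  "altdes_list b (x # y # zs) = of_bool (alt_step b x y) + altdes_list (\<not> b) (y # zs)"
| "altdes_list _ _ = 0"

lemma altdes_list_conv_sum:
  "altdes_list b xs = (\<Sum>i < length xs - 1. of_bool (alt_step (b = even i) (xs ! i) (xs ! Suc i)))"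
proof (induction b xs rule: altdes_list.induct)
  case (1 b x y zs)
  have len: "length (x # y # zs) - 1 = Suc (length (y # zs) - 1)" by simp
  show ?case
    unfolding len sum.lessThan_Suc_shift using 1 by (cases b) (simp_all del: sum_of_bool_eq)
qed auto

lemma altdes_list_Cons:
  "altdes_list b (x # ys) = (if ys = [] then 0 else of_bool (alt_step b x (hd ys)) + altdes_list (\<not> b) ys)"
  by (cases ys) auto

lemma altdes_list_append:
  "altdes_list b (xs @ ys) = altdes_list b xs + altdes_list (b = even (length xs)) ys
     + of_bool (xs \<noteq> [] \<and> ys \<noteq> [] \<and> alt_step (b = odd (length xs)) (last xs) (hd ys))"
proof (induction xs arbitrary: b)
  case (Cons x xs)
  then show ?case
    by (cases xs; cases b) (auto simp: altdes_list_Cons)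
qed simp

lemma altdes_list_map_antimono:
  assumes "\<And>x y. x \<in> set xs \<Longrightarrow> y \<in> set xs \<Longrightarrow> x < y \<Longrightarrow> f y < f x"
  shows "altdes_list (\<not> b) (map f xs) = altdes_list b xs"
  using assms
proof (induction b xs rule: altdes_list.induct)
  case (1 b x y zs)
  have "alt_step (\<not> b) (f x) (f y) \<longleftrightarrow> alt_step b x y"
    using "1.prems" by (intro alt_step_antimono) auto
  with 1 show ?case by simp
qed auto

definition complement :: "'a::linorder list \<Rightarrow> 'a list" where
  "complement xs = map (reflect (set xs)) xs"

lemma length_complement [simp]: "length (complement xs) = length xs"
  by (simp add: complement_def)

lemma set_complement [simp]: "set (complement xs) = set xs"
proof -
  have "reflect (set xs) ` set xs = set xs"
    by (auto simp: reflect_mem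
        intro!: image_eqI[where x = "reflect (set xs) x" for x] reflect_reflect[symmetric])
  then show ?thesis by (simp add: complement_def)
qed

lemma complement_complement [simp]: "complement (complement xs) = xs"
  unfolding complement_def[of "complement xs"] set_complement
  by (auto simp: complement_def reflect_reflect intro!: map_idI)

lemma distinct_complement: "distinct xs \<Longrightarrow> distinct (complement xs)"
  by (simp add: complement_def distinct_map) (metis inj_on_inverseI finite_set reflect_reflect)

lemma altdes_list_complement: "altdes_list (\<not> b) (complement xs) = altdes_list b xs"
  unfolding complement_def by (rule altdes_list_map_antimono) (simp add: reflect_strict_antimono)

lemma complement_permutations_of_set:
  "xs \<in> permutations_of_set A \<Longrightarrow> complement xs \<in> permutations_of_set A"
  by (simp add: permutations_of_set_def distinct_complement)

lemma bij_betw_complement: "bij_betw complement (permutations_of_set A) (permutations_of_set A)"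
  by (rule bij_betw_byWitness[where f' = complement]) (auto simp: complement_permutations_of_set)

text \<open>Complementing the tail compensates for the parity shift of its positions caused by the
  inserted entry; see \<open>altdes_list_insert_flip_tail\<close>.\<close>

definition insert_flip_tail :: "'a::linorder \<Rightarrow> nat \<Rightarrow> 'a list \<Rightarrow> 'a list" where
  "insert_flip_tail M j xs = take j xs @ M # complement (drop j xs)"

lemma altdes_list_insert_flip_tail:
  assumes M: "\<forall>x \<in> set xs. x < M" and j: "j \<le> length xs"
  shows "altdes_list b (insert_flip_tail M j xs)
           + of_bool (0 < j \<and> j < length xs \<and> alt_step (b = odd j) (xs ! (j - 1)) (xs ! j))
         = altdes_list b xs + of_bool (b = even j) * (of_bool (0 < j) + of_bool (j < length xs))"
proof -
  let ?us = "take j xs" and ?vs = "drop j xs" and ?b' = "b = even j"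
  have len: "length ?us = j" using j by simp
  have last_us: "0 < j \<Longrightarrow> last ?us = xs ! (j - 1)"
    using j by (subst last_conv_nth) auto
  have hd_vs: "j < length xs \<Longrightarrow> hd ?vs = xs ! j"
    by (simp add: hd_drop_conv_nth)
  have "0 < j \<Longrightarrow> xs ! (j - 1) < M"
    using M j by simp
  then have "0 < j \<Longrightarrow> alt_step (b = odd j) (xs ! (j - 1)) M \<longleftrightarrow> ?b'"
    by (auto simp: alt_step_def)
  then have ins: "altdes_list b (insert_flip_tail M j xs)
      = altdes_list b ?us + altdes_list ?b' (M # complement ?vs) + of_bool (0 < j \<and> ?b')"
    unfolding insert_flip_tail_def altdes_list_append len using last_us j by auto
  have tail: "altdes_list ?b' (M # complement ?vs) = of_bool (j < length xs \<and> ?b') + altdes_list ?b' ?vs"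
  proof (cases "j < length xs")
    case True
    then have ne: "complement ?vs \<noteq> []"
      by (metis length_complement length_drop length_greater_0_conv zero_less_diff)
    then have "hd (complement ?vs) \<in> set xs"
      by (metis hd_in_set set_complement in_set_dropD)
    then have "alt_step ?b' M (hd (complement ?vs)) \<longleftrightarrow> ?b'"
      using M by (auto simp: alt_step_def)
    then show ?thesis
      using True ne altdes_list_complement[of ?b' ?vs] by (simp add: altdes_list_Cons)
  next
    case False
    then show ?thesis by (simp add: complement_def)
  qed
  have "altdes_list b xs = altdes_list b (?us @ ?vs)" by simp
  also have "\<dots> = altdes_list b ?us + altdes_list ?b' ?vs
      + of_bool (0 < j \<and> j < length xs \<and> alt_step (b = odd j) (xs ! (j - 1)) (xs ! j))"
    unfolding altdes_list_append len using last_us hd_vs j by auto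
  finally show ?thesis
    using ins tail by auto
qed

lemma insert_flip_tail_permutations_of_set:
  assumes xs: "xs \<in> permutations_of_set A" and M: "M \<notin> A"
  shows "insert_flip_tail M j xs \<in> permutations_of_set (insert M A)"
proof -
  have "distinct xs" and "set xs = A"
    using xs by (auto dest: permutations_of_setD)
  moreover have "set (take j xs) \<union> set (drop j xs) = set xs"
    by (metis set_append append_take_drop_id)
  ultimately show ?thesis
    using M by (auto simp: insert_flip_tail_def permutations_of_set_def distinct_complement
        set_take_disj_set_drop_if_distinct dest: in_set_takeD in_set_dropD)
qed

lemma insert_flip_tail_inject:
  assumes "M \<notin> set xs" and "M \<notin> set ys" and "j \<le> length xs" and "k \<le> length ys"
    and eq: "insert_flip_tail M j xs = insert_flip_tail M k ys"
  shows "j = k \<and> xs = ys"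
proof -
  have prefix: "takeWhile (\<lambda>x. x \<noteq> M) (insert_flip_tail M i zs) = take i zs" if "M \<notin> set zs" for i zs
  proof -
    have "\<forall>x \<in> set (take i zs). x \<noteq> M"
      using that by (auto dest: in_set_takeD)
    then show ?thesis by (simp add: insert_flip_tail_def takeWhile_append2)
  qed
  then have "take j xs = take k ys"
    using assms by metis
  then have "j = k"
    using assms by (metis length_take min.absorb2)
  have "complement (drop j xs) = complement (drop j ys)"
    using arg_cong[OF eq, of "drop (Suc j)"] \<open>take j xs = take k ys\<close> \<open>j = k\<close> assms
    by (simp add: insert_flip_tail_def)
  then have "drop j xs = drop j ys"
    by (metis complement_complement)
  with \<open>take j xs = take k ys\<close> \<open>j = k\<close> show ?thesis
    by (metis append_take_drop_id)
qed

abbreviation perm_lists :: "nat \<Rightarrow> nat list set" where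
  "perm_lists n \<equiv> permutations_of_set {1..n}"

lemma bij_betw_insert_flip_tail:
  "bij_betw (\<lambda>(j, xs). insert_flip_tail (Suc n) j xs) ({..n} \<times> perm_lists n) (perm_lists (Suc n))"
proof (rule bij_betw_if_inj_on_card_eq)
  let ?f = "\<lambda>(j, xs). insert_flip_tail (Suc n) j xs" and ?A = "{..n} \<times> perm_lists n"
  show "inj_on ?f ?A"
  proof (rule inj_onI)
    fix x y
    assume "x \<in> ?A" "y \<in> ?A" "?f x = ?f y"
    moreover obtain j xs k ys where "x = (j, xs)" "y = (k, ys)"
      by fastforce
    moreover have "Suc n \<notin> set zs \<and> length zs = n" if "zs \<in> perm_lists n" for zs
      using that by (auto simp: length_finite_permutations_of_set dest: permutations_of_setD(1))
    ultimately show "x = y"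
      using insert_flip_tail_inject[of "Suc n" xs ys j k] by auto
  qed
  show "?f ` ?A \<subseteq> perm_lists (Suc n)"
    using insert_flip_tail_permutations_of_set[of _ "{1..n}" "Suc n"]
    by (auto simp: atLeastAtMostSuc_conv)
  show "card ?A = card (perm_lists (Suc n))"
    by (simp add: card_cartesian_product)
qed simp

lemma sum_perm_lists_Suc:
  "(\<Sum>p \<in> perm_lists (Suc n). g p) = (\<Sum>xs \<in> perm_lists n. \<Sum>j \<le> n. g (insert_flip_tail (Suc n) j xs))"
proof -
  have "(\<Sum>p \<in> perm_lists (Suc n). g p)
      = (\<Sum>x \<in> {..n} \<times> perm_lists n. g (case x of (j, xs) \<Rightarrow> insert_flip_tail (Suc n) j xs))"
    by (rule sum.reindex_bij_betw[OF bij_betw_insert_flip_tail, symmetric])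
  also have "\<dots> = (\<Sum>j \<le> n. \<Sum>xs \<in> perm_lists n. g (insert_flip_tail (Suc n) j xs))"
    by (subst sum.cartesian_product) (simp add: split_def)
  also have "\<dots> = (\<Sum>xs \<in> perm_lists n. \<Sum>j \<le> n. g (insert_flip_tail (Suc n) j xs))"
    by (rule sum.swap)
  finally show ?thesis .
qed

lemma altdes_insert_flip_tail_distribution:
  assumes t: "t \<in> perm_lists n" and n: "1 \<le> n"
  defines "a \<equiv> int (altdes_list True t)"
  shows "(\<Sum>j \<le> n. of_bool (int (altdes_list True (insert_flip_tail (Suc n) j t)) = k)
                 + of_bool (int (altdes_list False (insert_flip_tail (Suc n) j (complement t))) = k))
       = (a + 2) * of_bool (k = a + 1) + a * of_bool (k = a - 1)
         + (int n - 1 - a) * of_bool (k = a + 2) + (int n + 1 - a) * of_bool (k = a)"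
proof -
  define s where "s = complement t"
  define f :: "nat \<Rightarrow> int" where
    "f j = of_bool (int (altdes_list True (insert_flip_tail (Suc n) j t)) = k)
         + of_bool (int (altdes_list False (insert_flip_tail (Suc n) j s)) = k)" for j
  define D where "D i \<longleftrightarrow> alt_step (even i) (t ! i) (t ! Suc i)" for i
  define X :: int where "X = of_bool (k = a + 1) + of_bool (k = a - 1)"
  define Y :: int where "Y = of_bool (k = a + 2) + of_bool (k = a)"
  have "set t = {1..n}" and len_t: "length t = n"
    using t by (auto simp: length_finite_permutations_of_set dest: permutations_of_setD)
  then have below: "\<forall>x \<in> set t. x < Suc n" "\<forall>x \<in> set s. x < Suc n" and len_s: "length s = n"
    by (auto simp: s_def)
  have a_s: "int (altdes_list False s) = a"
    using altdes_list_complement[of True t] by (simp add: a_def s_def)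
  have D_s: "alt_step (odd i) (s ! i) (s ! Suc i) \<longleftrightarrow> D i" if "i < n - 1" for i
  proof -
    have "t ! i \<in> set t" "t ! Suc i \<in> set t"
      using that len_t by auto
    then show ?thesis
      using that len_t alt_step_antimono[of "t ! i" "t ! Suc i" "reflect (set t)" "even i"]
      by (auto simp: s_def complement_def D_def reflect_strict_antimono)
  qed
  note ins_t = altdes_list_insert_flip_tail[OF below(1), of _ True, unfolded len_t]
  note ins_s = altdes_list_insert_flip_tail[OF below(2), of _ False, unfolded len_s]
  have f_end: "f 0 = of_bool (k = a + 1) + of_bool (k = a)" "f n = of_bool (k = a + 1) + of_bool (k = a)"
    using ins_t[of 0] ins_s[of 0] ins_t[of n] ins_s[of n] n a_s
    by (auto simp: f_def a_def)
  have f_mid: "f (Suc i) = (if D i then X else Y)" if "i < n - 1" for i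
  proof -
    have j: "Suc i < n" using that by linarith
    have "int (altdes_list True (insert_flip_tail (Suc n) (Suc i) t)) = a - of_bool (D i) + 2 * of_bool (odd i)"
      using ins_t[of "Suc i"] j by (cases "D i"; cases "even i") (auto simp: a_def D_def)
    moreover have "int (altdes_list False (insert_flip_tail (Suc n) (Suc i) s)) = a - of_bool (D i) + 2 * of_bool (even i)"
      using ins_s[of "Suc i"] j a_s D_s[OF that] by (cases "D i"; cases "even i") auto
    ultimately show ?thesis
      by (cases "D i"; cases "even i") (auto simp: f_def X_def Y_def)
  qed
  have "(\<Sum>j \<le> n. f j) = f 0 + f n + (\<Sum>i < n - 1. f (Suc i))"
  proof -
    obtain m where m: "n = Suc m" using n by (cases n) auto
    have "(\<Sum>j \<le> n. f j) = f 0 + (\<Sum>i < n. f (Suc i))"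
      by (simp add: sum.atMost_shift)
    then show ?thesis by (simp add: m add.commute add.left_commute)
  qed
  also have "(\<Sum>i < n - 1. f (Suc i)) = (\<Sum>i < n - 1. of_bool (D i) * X + (1 - of_bool (D i)) * Y)"
    using f_mid by (intro sum.cong) auto
  also have "\<dots> = a * X + (int n - 1 - a) * Y"
  proof -
    have "(\<Sum>i < n - 1. of_bool (D i) :: int) = a"
      by (simp add: a_def altdes_list_conv_sum len_t D_def of_nat_sum)
    then show ?thesis
      using n by (simp add: sum.distrib sum_distrib_right sum_subtractf of_nat_diff algebra_simps)
  qed
  finally have "(\<Sum>j \<le> n. f j) = 2 * (of_bool (k = a + 1) + of_bool (k = a)) + a * X + (int n - 1 - a) * Y"
    using f_end by simp
  then show ?thesis
    unfolding f_def s_def X_def Y_def by (simp add: algebra_simps)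
qed

lemma bij_betw_permutes_perm_lists:
  "bij_betw (\<lambda>p. map p [1..<Suc n]) {p. p permutes {1..n}} (perm_lists n)"
proof (rule bij_betw_if_inj_on_card_eq)
  show "inj_on (\<lambda>p. map p [1..<Suc n]) {p. p permutes {1..n}}"
  proof (rule inj_onI, rule ext)
    fix p q x
    assume p: "p \<in> {p. p permutes {1..n}}" and q: "q \<in> {p. p permutes {1..n}}"
      and "map p [1..<Suc n] = map q [1..<Suc n]"
    then have "x \<in> {1..n} \<Longrightarrow> p x = q x"
      by (metis map_eq_conv set_upt atLeastLessThanSuc_atLeastAtMost)
    with p q show "p x = q x"
      by (metis mem_Collect_eq permutes_not_in)
  qed
  show "(\<lambda>p. map p [1..<Suc n]) ` {p. p permutes {1..n}} \<subseteq> perm_lists n"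
  proof (rule image_subsetI)
    fix p
    assume "p \<in> {p. p permutes {1..n}}"
    then have p: "p permutes {1..n}" by simp
    have upt: "set [1..<Suc n] = {1..n}" by auto
    show "map p [1..<Suc n] \<in> perm_lists n"
    proof (rule permutations_of_setI)
      show "set (map p [1..<Suc n]) = {1..n}"
        unfolding set_map upt by (rule permutes_image[OF p])
      show "distinct (map p [1..<Suc n])"
        unfolding distinct_map upt using permutes_inj_on[OF p] by simp
    qed
  qed
  show "card {p. p permutes {1..n}} = card (perm_lists n)"
    by (simp add: card_permutations)
qed simp

lemma altdes_conv_altdes_list: "altdes n p = altdes_list True (map p [1..<Suc n])"
proof -
  define D where "D i \<longleftrightarrow> alt_step (even i) (p (Suc i)) (p (Suc (Suc i)))" for i
  have "altdes_set n p = Suc ` {i. i < n - 1 \<and> D i}"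
  proof (intro set_eqI iffI)
    fix i
    assume "i \<in> altdes_set n p"
    then obtain j where "i = Suc j" "j < n - 1" "D j"
      unfolding altdes_set_def D_def alt_step_def by (cases i) auto
    then show "i \<in> Suc ` {i. i < n - 1 \<and> D i}" by blast
  next
    fix i
    assume "i \<in> Suc ` {i. i < n - 1 \<and> D i}"
    then show "i \<in> altdes_set n p"
      unfolding altdes_set_def D_def alt_step_def by (auto split: if_splits)
  qed
  then have "altdes n p = card {i. i < n - 1 \<and> D i}"
    by (simp add: altdes_def card_image)
  also have "\<dots> = altdes_list True (map p [1..<Suc n])"
    by (simp add: altdes_list_conv_sum D_def Int_def conj_commute del: upt_Suc)
  finally show ?thesis .
qed

lemma altEuler_conv_perm_lists:
  "altEuler n k = (\<Sum>xs \<in> perm_lists n. of_bool (int (altdes_list b xs) = k))"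
proof -
  have "altEuler n k = (\<Sum>p \<in> {p. p permutes {1..n}}. of_bool (int (altdes n p) = k))"
    by (simp add: altEuler_def Int_def finite_permutations)
  also have "\<dots> = (\<Sum>xs \<in> perm_lists n. of_bool (int (altdes_list True xs) = k))"
    unfolding altdes_conv_altdes_list by (rule sum.reindex_bij_betw[OF bij_betw_permutes_perm_lists])
  also have "\<dots> = (\<Sum>xs \<in> perm_lists n. of_bool (int (altdes_list b xs) = k))"
  proof (cases b)
    case False
    have "(\<Sum>xs \<in> perm_lists n. of_bool (int (altdes_list True xs) = k))
        = (\<Sum>xs \<in> perm_lists n. of_bool (int (altdes_list False (complement xs)) = k))"
      by (simp add: altdes_list_complement[of True, simplified])
    also have "\<dots> = (\<Sum>xs \<in> perm_lists n. of_bool (int (altdes_list False xs) = k))"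
      by (rule sum.reindex_bij_betw[OF bij_betw_complement])
    finally show ?thesis using False by (simp del: sum_of_bool_eq)
  qed simp
  finally show ?thesis .
qed

lemma altEuler_Suc:
  assumes "1 \<le> n"
  shows "2 * altEuler (Suc n) k = (k + 1) * (altEuler n (k + 1) + altEuler n (k - 1))
                                 + (int n - k + 1) * (altEuler n k + altEuler n (k - 2))"
proof -
  let ?I = "\<lambda>b c xs. of_bool (int (altdes_list b xs) = c) :: int"
  have by_value: "(a + 2) * of_bool (k = a + 1) + a * of_bool (k = a - 1)
        + (int n - 1 - a) * of_bool (k = a + 2) + (int n + 1 - a) * of_bool (k = a)
      = (k + 1) * (of_bool (a = k + 1) + of_bool (a = k - 1))
        + (int n - k + 1) * (of_bool (a = k) + of_bool (a = k - 2))" for a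
    by (cases "a = k + 1"; cases "a = k - 1"; cases "a = k"; cases "a = k - 2") auto
  have complement_first: "(\<Sum>xs \<in> perm_lists n. \<Sum>j \<le> n. ?I False k (insert_flip_tail (Suc n) j xs))
      = (\<Sum>xs \<in> perm_lists n. \<Sum>j \<le> n. ?I False k (insert_flip_tail (Suc n) j (complement xs)))"
    by (rule sum.reindex_bij_betw[OF bij_betw_complement, symmetric])
  have "2 * altEuler (Suc n) k
      = (\<Sum>p \<in> perm_lists (Suc n). ?I True k p) + (\<Sum>p \<in> perm_lists (Suc n). ?I False k p)"
    unfolding mult_2 by (rule arg_cong2[where f = "(+)"]) (rule altEuler_conv_perm_lists)+
  also have "\<dots> = (\<Sum>xs \<in> perm_lists n. \<Sum>j \<le> n. ?I True k (insert_flip_tail (Suc n) j xs)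
      + ?I False k (insert_flip_tail (Suc n) j (complement xs)))"
    unfolding sum_perm_lists_Suc complement_first by (simp only: sum.distrib)
  also have "\<dots> = (\<Sum>xs \<in> perm_lists n. (k + 1) * (?I True (k + 1) xs + ?I True (k - 1) xs)
      + (int n - k + 1) * (?I True k xs + ?I True (k - 2) xs))"
    by (rule sum.cong[OF refl], subst altdes_insert_flip_tail_distribution[OF _ assms])
      (simp_all only: by_value)
  also have "\<dots> = (k + 1) * (altEuler n (k + 1) + altEuler n (k - 1))
      + (int n - k + 1) * (altEuler n k + altEuler n (k - 2))"
    by (simp only: altEuler_conv_perm_lists[of n _ True] sum.distrib sum_distrib_left distrib_left)
  finally show ?thesis .
qed

lemma altEuler_1: "altEuler 1 k = of_bool (k = 0)"
  unfolding altEuler_conv_perm_lists[of 1 k True] by simp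

theorem theorem2p1:
  shows "(\<forall>n::nat. \<forall>k::int. n \<ge> 1 \<longrightarrow>
            2 * altEuler (n + 1) k =
              (k + 1) * (altEuler n (k + 1) + altEuler n (k - 1))
              + (int n - k + 1) * (altEuler n k + altEuler n (k - 2)))
         \<and> altEuler 1 0 = 1 \<and> (\<forall>k::int. k \<noteq> 0 \<longrightarrow> altEuler 1 k = 0)"
proof (intro conjI allI impI)
  fix n :: nat and k :: int
  assume "n \<ge> 1"
  then show "2 * altEuler (n + 1) k = (k + 1) * (altEuler n (k + 1) + altEuler n (k - 1))
      + (int n - k + 1) * (altEuler n k + altEuler n (k - 2))"
    by (simp add: altEuler_Suc)
next
  show "altEuler 1 0 = 1"
    using altEuler_1[of 0] by simp
next
  fix k :: int
  assume "k \<noteq> 0"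
  then show "altEuler 1 k = 0"
    using altEuler_1[of k] by simp
qed

end
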